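(* Let $\{\theta_m\}$ satisfy $\theta_1\ge\theta_2\ge\cdots\ge0$, $\theta_m\to0$; $\mathcal B=\mathcal B(\{\theta_m\})$; $b_1,b_2>0$. There exists $C_3>0$, depending only on $b_1,b_2$ (besides $N$ and $\{\theta_m\}$), such that for all $m\in\mathbb N$ with $\theta_m\le1$ and every $g\in V$ satisfying (H), writing $g_m=E_mg$, one has $\mathscr L_{g_m}(\mathcal B)\subset\mathcal B$ and $\|\mathscr L_g-\mathscr L_{g_m}\|_{\mathcal B\to\mathcal B}\le C_3\theta_m$.
   Context: $\Sigma_{\mathbf A}^+$ is the one-sided Markov shift of an $N\times N$ zero-one aperiodic matrix $\mathbf A$, $\sigma_{\mathbf A}$ the shift. $\mathrm{var}_k(\phi)=\sup\{|\phi(\omega)-\phi(\omega')|:\omega_j=\omega'_j,\ 0\le j\le k-1\}$; $V=\{\phi:\mathrm{var}_k(\phi)^{1/k}\to0\}$. $(\mathscr L_g\phi)(\omega)=\sum_{\sigma_{\mathbf A}\omega'=\omega}e^{g(\omega')}\phi(\omega')$. $\mathcal B(\{\theta_m\})=\{\phi\in V:\exists C\ge0,\ \mathrm{var}_k(\phi)\le C\theta_{k+1}^k\ \forall k\ge0\}$ with norm $\|\phi\|_\infty+\inf C$. Fix a Borel probability $\mu$ charging all nonempty open sets; $(E_m\phi)(\omega)=\mu([\omega|m])^{-1}\int_{[\omega|m]}\phi\,d\mu$, $[\omega|m]=\{\xi:\xi_j=\omega_j,0\le j\le m-1\}$. Condition (H) on $g\in V$: $e^{\max\mathrm{Re}\,g}\le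 b_1$ and $\mathrm{var}_k(g)\le b_2\theta_k^k$ for all $k\in\mathbb N$. *)

theory Defs
  imports "HOL-Probability.Probability"
begin

text \<open>Alphabet {0..<N}; the zero-one matrix A is a function nat => nat => real.\<close>

fun mpow :: "nat \<Rightarrow> (nat \<Rightarrow> nat \<Rightarrow> real) \<Rightarrow> nat \<Rightarrow> nat \<Rightarrow> nat \<Rightarrow> real" where
  "mpow N A 0 i j = (if i = j then 1 else 0)"
| "mpow N A (Suc p) i j = (\<Sum>k<N. mpow N A p i k * A k j)"

definition zero_one_aperiodic :: "nat \<Rightarrow> (nat \<Rightarrow> nat \<Rightarrow> real) \<Rightarrow> bool" where
  "zero_one_aperiodic N A \<longleftrightarrow>
     (\<forall>i<N. \<forall>j<N. A i j = 0 \<or> A i j = 1) \<and>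
     (\<exists>p>0. \<forall>i<N. \<forall>j<N. mpow N A p i j > 0)"

definition SigmaA :: "nat \<Rightarrow> (nat \<Rightarrow> nat \<Rightarrow> real) \<Rightarrow> (nat \<Rightarrow> nat) set" where
  "SigmaA N A = {\<omega>. \<forall>j. \<omega> j < N \<and> A (\<omega> j) (\<omega> (Suc j)) = 1}"

definition shift :: "(nat \<Rightarrow> nat) \<Rightarrow> (nat \<Rightarrow> nat)" where
  "shift \<omega> = (\<lambda>j. \<omega> (Suc j))"

definition var :: "(nat \<Rightarrow> nat) set \<Rightarrow> nat \<Rightarrow> ((nat \<Rightarrow> nat) \<Rightarrow> complex) \<Rightarrow> real" where
  "var S k \<phi> = Sup {cmod (\<phi> \<omega> - \<phi> \<omega>') | \<omega> \<omega>'.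
      \<omega> \<in> S \<and> \<omega>' \<in> S \<and> (\<forall>j<k. \<omega> j = \<omega>' j)}"

text \<open>The class V (var_k is required to be finite for every k, as implicit in the paper).\<close>
definition Vcl :: "(nat \<Rightarrow> nat) set \<Rightarrow> ((nat \<Rightarrow> nat) \<Rightarrow> complex) set" where
  "Vcl S = {\<phi>. (\<forall>k. bdd_above {cmod (\<phi> \<omega> - \<phi> \<omega>') | \<omega> \<omega>'.
                      \<omega> \<in> S \<and> \<omega>' \<in> S \<and> (\<forall>j<k. \<omega> j = \<omega>' j)}) \<and>
              (\<lambda>k. root k (var S k \<phi>)) \<longlonglongrightarrow> 0}"

definition ruelle :: "(nat \<Rightarrow> nat) set \<Rightarrow> ((nat \<Rightarrow> nat) \<Rightarrow> complex) \<Rightarrow>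
    ((nat \<Rightarrow> nat) \<Rightarrow> complex) \<Rightarrow> ((nat \<Rightarrow> nat) \<Rightarrow> complex)" where
  "ruelle S g \<phi> = (\<lambda>\<omega>. \<Sum>\<omega>'\<in>{\<omega>'\<in>S. shift \<omega>' = \<omega>}. exp (g \<omega>') * \<phi> \<omega>')"

text \<open>The Banach space B({theta_m}); theta is indexed from 1 (theta 0 unused).\<close>
definition Bsp :: "(nat \<Rightarrow> nat) set \<Rightarrow> (nat \<Rightarrow> real) \<Rightarrow> ((nat \<Rightarrow> nat) \<Rightarrow> complex) set" where
  "Bsp S \<theta> = {\<phi> \<in> Vcl S. \<exists>C\<ge>0. \<forall>k. var S k \<phi> \<le> C * \<theta> (k+1) ^ k}"

definition supnorm :: "(nat \<Rightarrow> nat) set \<Rightarrow> ((nat \<Rightarrow> nat) \<Rightarrow> complex) \<Rightarrow> real" where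
  "supnorm S \<phi> = Sup ((\<lambda>\<omega>. cmod (\<phi> \<omega>)) ` S)"

definition Bnorm :: "(nat \<Rightarrow> nat) set \<Rightarrow> (nat \<Rightarrow> real) \<Rightarrow> ((nat \<Rightarrow> nat) \<Rightarrow> complex) \<Rightarrow> real" where
  "Bnorm S \<theta> \<phi> = supnorm S \<phi> + Inf {C. C \<ge> 0 \<and> (\<forall>k. var S k \<phi> \<le> C * \<theta> (k+1) ^ k)}"

definition cyl :: "(nat \<Rightarrow> nat) set \<Rightarrow> (nat \<Rightarrow> nat) \<Rightarrow> nat \<Rightarrow> (nat \<Rightarrow> nat) set" where
  "cyl S \<omega> m = {\<xi> \<in> S. \<forall>j<m. \<xi> j = \<omega> j}"

definition condE :: "(nat \<Rightarrow> nat) measure \<Rightarrow> (nat \<Rightarrow> nat) set \<Rightarrow> nat \<Rightarrow>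
    ((nat \<Rightarrow> nat) \<Rightarrow> complex) \<Rightarrow> ((nat \<Rightarrow> nat) \<Rightarrow> complex)" where
  "condE \<mu> S m \<phi> = (\<lambda>\<omega>. (LINT \<xi>:cyl S \<omega> m|\<mu>. \<phi> \<xi>) / complex_of_real (measure \<mu> (cyl S \<omega> m)))"

definition admissible_measure :: "(nat \<Rightarrow> nat) set \<Rightarrow> (nat \<Rightarrow> nat) measure \<Rightarrow> bool" where
  "admissible_measure S \<mu> \<longleftrightarrow> prob_space \<mu> \<and> sets \<mu> = sets (restrict_space borel S) \<and>
     (\<forall>U. openin (top_of_set S) U \<and> U \<noteq> {} \<longrightarrow> measure \<mu> U > 0)"

definition condH :: "(nat \<Rightarrow> nat) set \<Rightarrow> (nat \<Rightarrow> real) \<Rightarrow> real \<Rightarrow> real \<Rightarrow> ((nat \<Rightarrow> nat) \<Rightarrow> complex) \<Rightarrow> bool" where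
  "condH S \<theta> b1 b2 g \<longleftrightarrow> (\<forall>\<omega>\<in>S. exp (Re (g \<omega>)) \<le> b1) \<and>
     (\<forall>k\<ge>1. var S k g \<le> b2 * \<theta> k ^ k)"

end

theory Submission
  imports Defs
begin

text \<open>
  The difference L_g \<phi> - L_{g_m} \<phi> is the transfer operator with weight w = e^g - e^{g_m}.
  Averaging over m-cylinders moves g by at most b2 \<theta>_m^m, so |w| = O(\<theta>_m). On cylinders
  of length at least m the function g_m is constant, so there w oscillates only as much as e^g,
  i.e. by O(\<theta>_k^k) = O(\<theta>_m \<theta>_k^(k-1)); on shorter cylinders twice the sup bound
  O(\<theta>_m^m) is already of that size. Finally, a transfer operator whose weight has sup norm W
  and oscillation U \<theta>_(k+1)^k on (k+1)-cylinders maps B into itself with norm O(W + U), because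
  the preimages of two points sharing k \<ge> 1 symbols pair up, through a common first symbol,
  into points sharing k + 1 symbols.
\<close>

lemma dist_le_var:
  assumes "\<phi> \<in> Vcl S" "\<omega> \<in> S" "\<xi> \<in> S" "\<forall>j<k. \<omega> j = \<xi> j"
  shows "cmod (\<phi> \<omega> - \<phi> \<xi>) \<le> var S k \<phi>"
proof -
  have "bdd_above {cmod (\<phi> \<omega> - \<phi> \<omega>') | \<omega> \<omega>'. \<omega> \<in> S \<and> \<omega>' \<in> S \<and> (\<forall>j<k. \<omega> j = \<omega>' j)}"
    using assms(1) unfolding Vcl_def by auto
  then show ?thesis unfolding var_def by (rule cSup_upper[rotated]) (use assms in blast)
qed

lemma var_le:
  assumes "S \<noteq> {}"
    and "\<And>\<omega> \<xi>. \<omega> \<in> S \<Longrightarrow> \<xi> \<in> S \<Longrightarrow> \<forall>j<k. \<omega> j = \<xi> j \<Longrightarrow> cmod (\<phi> \<omega> - \<phi> \<xi>) \<le> M"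
  shows "var S k \<phi> \<le> M"
  unfolding var_def using assms by (intro cSup_least) auto

lemma norm_le_supnorm:
  assumes "\<phi> \<in> Vcl S" "\<xi> \<in> S"
  shows "cmod (\<phi> \<xi>) \<le> supnorm S \<phi>"
proof -
  have "cmod (\<phi> \<eta>) \<le> cmod (\<phi> \<xi>) + var S 0 \<phi>" if "\<eta> \<in> S" for \<eta>
    using dist_le_var[OF assms(1) that assms(2), of 0] norm_triangle_ineq2[of "\<phi> \<eta>" "\<phi> \<xi>"] by simp
  then have "bdd_above ((\<lambda>\<eta>. cmod (\<phi> \<eta>)) ` S)" by (intro bdd_aboveI2) 
  then show ?thesis unfolding supnorm_def using assms(2) by (rule cSUP_upper2) simp
qed

lemma supnorm_le:
  assumes "S \<noteq> {}" "\<forall>\<xi>\<in>S. cmod (\<phi> \<xi>) \<le> M"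
  shows "supnorm S \<phi> \<le> M"
  unfolding supnorm_def using assms by (intro cSUP_least) auto

lemma supnorm_nonneg:
  assumes "\<phi> \<in> Vcl S" "S \<noteq> {}"
  shows "0 \<le> supnorm S \<phi>"
  using assms norm_le_supnorm[OF assms(1)] by (meson ex_in_conv norm_ge_zero order_trans)

definition var_consts ::
    "(nat \<Rightarrow> nat) set \<Rightarrow> (nat \<Rightarrow> real) \<Rightarrow> ((nat \<Rightarrow> nat) \<Rightarrow> complex) \<Rightarrow> real set" where
  "var_consts S \<theta> \<phi> = {C. C \<ge> 0 \<and> (\<forall>k. var S k \<phi> \<le> C * \<theta> (k+1) ^ k)}"

lemma Bsp_iff_var_consts: "\<phi> \<in> Bsp S \<theta> \<longleftrightarrow> \<phi> \<in> Vcl S \<and> var_consts S \<theta> \<phi> \<noteq> {}"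
  unfolding Bsp_def var_consts_def by auto

lemma Bnorm_eq: "Bnorm S \<theta> \<phi> = supnorm S \<phi> + Inf (var_consts S \<theta> \<phi>)"
  unfolding Bnorm_def var_consts_def ..

lemma Inf_var_consts_nonneg: "var_consts S \<theta> \<phi> \<noteq> {} \<Longrightarrow> 0 \<le> Inf (var_consts S \<theta> \<phi>)"
  by (rule cInf_greatest) (auto simp: var_consts_def)

definition osc_bound ::
    "(nat \<Rightarrow> nat) set \<Rightarrow> (nat \<Rightarrow> real) \<Rightarrow> real \<Rightarrow> ((nat \<Rightarrow> nat) \<Rightarrow> complex) \<Rightarrow> bool" where
  "osc_bound S \<theta> C f \<longleftrightarrow>
     (\<forall>k. \<forall>\<omega>\<in>S. \<forall>\<xi>\<in>S. (\<forall>j<k. \<omega> j = \<xi> j) \<longrightarrow> cmod (f \<omega> - f \<xi>) \<le> C * \<theta> (k+1) ^ k)"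

lemma osc_boundD:
  "osc_bound S \<theta> C f \<Longrightarrow> \<omega> \<in> S \<Longrightarrow> \<xi> \<in> S \<Longrightarrow> \<forall>j<k. \<omega> j = \<xi> j \<Longrightarrow>
     cmod (f \<omega> - f \<xi>) \<le> C * \<theta> (k+1) ^ k"
  unfolding osc_bound_def by blast

lemma osc_bound_if_var_consts:
  assumes "\<phi> \<in> Vcl S" "C \<in> var_consts S \<theta> \<phi>"
  shows "osc_bound S \<theta> C \<phi>"
  unfolding osc_bound_def
proof (intro allI ballI impI)
  fix k \<omega> \<xi> assume "\<omega> \<in> S" "\<xi> \<in> S" "\<forall>j<k. \<omega> j = \<xi> j"
  then have "cmod (\<phi> \<omega> - \<phi> \<xi>) \<le> var S k \<phi>" by (rule dist_le_var[OF assms(1)])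
  also have "\<dots> \<le> C * \<theta> (k+1) ^ k" using assms(2) unfolding var_consts_def by blast
  finally show "cmod (\<phi> \<omega> - \<phi> \<xi>) \<le> C * \<theta> (k+1) ^ k" .
qed

lemma var_consts_if_osc_bound:
  assumes "S \<noteq> {}" "C \<ge> 0" "osc_bound S \<theta> C f"
  shows "C \<in> var_consts S \<theta> f"
proof -
  have "var S k f \<le> C * \<theta> (k+1) ^ k" for k
    using assms(3) by (intro var_le[OF assms(1)]) (rule osc_boundD)
  then show ?thesis unfolding var_consts_def using assms(2) by blast
qed

lemma osc_bound_diff:
  assumes "osc_bound S \<theta> C f" "osc_bound S \<theta> D g"
  shows "osc_bound S \<theta> (C + D) (\<lambda>\<omega>. f \<omega> - g \<omega>)"
  unfolding osc_bound_def
proof (intro allI ballI impI)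
  fix k \<omega> \<xi> assume "\<omega> \<in> S" "\<xi> \<in> S" "\<forall>j<k. \<omega> j = \<xi> j"
  then have "cmod (f \<omega> - f \<xi>) + cmod (g \<omega> - g \<xi>) \<le> (C + D) * \<theta> (k+1) ^ k"
    using assms[THEN osc_boundD] by (simp add: distrib_right add_mono)
  moreover have "cmod ((f \<omega> - g \<omega>) - (f \<xi> - g \<xi>)) \<le> cmod (f \<omega> - f \<xi>) + cmod (g \<omega> - g \<xi>)"
    using norm_triangle_ineq4[of "f \<omega> - f \<xi>" "g \<omega> - g \<xi>"] by (simp add: algebra_simps)
  ultimately show "cmod ((f \<omega> - g \<omega>) - (f \<xi> - g \<xi>)) \<le> (C + D) * \<theta> (k+1) ^ k" by linarith
qed

lemma cInf_le_affine:
  fixes X Y :: "real set"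
  assumes "X \<noteq> {}" "bdd_below Y" "a \<ge> 0" "\<And>x. x \<in> X \<Longrightarrow> a * x + b \<in> Y"
  shows "Inf Y \<le> a * Inf X + b"
proof (cases "a = 0")
  case True
  with assms show ?thesis by (metis cInf_lower ex_in_conv mult_zero_left)
next
  case False
  have "(Inf Y - b) / a \<le> Inf X"
  proof (rule cInf_greatest[OF assms(1)])
    fix x assume "x \<in> X"
    then have "Inf Y \<le> a * x + b" using assms(2,4) by (intro cInf_lower)
    then show "(Inf Y - b) / a \<le> x" using False assms(3) by (simp add: divide_le_eq algebra_simps)
  qed
  then show ?thesis using False assms(3) by (simp add: divide_le_eq algebra_simps)
qed

lemma Bnorm_le_if_var_consts:
  assumes "a \<ge> 0" "supnorm S \<psi> \<le> a * supnorm S \<phi>" "var_consts S \<theta> \<phi> \<noteq> {}"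
    and "\<And>C. C \<in> var_consts S \<theta> \<phi> \<Longrightarrow> a * (supnorm S \<phi> + C) \<in> var_consts S \<theta> \<psi>"
  shows "Bnorm S \<theta> \<psi> \<le> 2 * a * Bnorm S \<theta> \<phi>"
proof -
  have "Inf (var_consts S \<theta> \<psi>) \<le> a * Inf (var_consts S \<theta> \<phi>) + a * supnorm S \<phi>"
  proof (rule cInf_le_affine[OF assms(3) _ assms(1)])
    show "bdd_below (var_consts S \<theta> \<psi>)" unfolding var_consts_def by (rule bdd_belowI[of _ 0]) auto
  qed (use assms(4) in \<open>simp add: distrib_left add.commute\<close>)
  moreover have "0 \<le> a * Inf (var_consts S \<theta> \<phi>)"
    using assms(1,3) Inf_var_consts_nonneg by simp
  ultimately show ?thesis using assms(2) unfolding Bnorm_eq by (simp add: algebra_simps)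
qed

locale theta_sequence =
  fixes \<theta> :: "nat \<Rightarrow> real"
  assumes theta_decreasing: "\<forall>m\<ge>1. \<theta> (Suc m) \<le> \<theta> m"
    and theta_nonneg: "\<forall>m\<ge>1. \<theta> m \<ge> 0"
    and theta_lim: "\<theta> \<longlonglongrightarrow> 0"
begin

lemma theta_antimono:
  assumes "1 \<le> a" "a \<le> b"
  shows "\<theta> b \<le> \<theta> a"
  using assms(2)
proof (induction rule: dec_induct)
  case (step n)
  then show ?case using theta_decreasing assms(1) by (meson order.trans)
qed simp

lemma theta_Suc_nonneg [simp]: "0 \<le> \<theta> (Suc k)"
  using theta_nonneg by simp

lemma theta_pow_nonneg: "0 \<le> \<theta> (k+1) ^ k"
  by simp

lemma osc_bound_mono: "osc_bound S \<theta> C f \<Longrightarrow> C \<le> D \<Longrightarrow> osc_bound S \<theta> D f"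
  unfolding osc_bound_def using theta_pow_nonneg by (meson mult_right_mono order.trans)

text \<open>The k-th root of C \<theta>_(k+1)^k is root k C \<cdot> \<theta>_(k+1), which tends to 0.\<close>
lemma Vcl_if_osc_bound:
  assumes "S \<noteq> {}" "C \<ge> 0" "osc_bound S \<theta> C f"
  shows "f \<in> Vcl S"
proof -
  have var: "C \<in> var_consts S \<theta> f" by (rule var_consts_if_osc_bound[OF assms])
  have bdd: "bdd_above {cmod (f \<omega> - f \<omega>') | \<omega> \<omega>'. \<omega> \<in> S \<and> \<omega>' \<in> S \<and> (\<forall>j<k. \<omega> j = \<omega>' j)}" for k
    using assms(3) unfolding osc_bound_def by (intro bdd_aboveI[where M="C * \<theta> (k+1) ^ k"]) blast
  obtain s where s: "s \<in> S" using assms(1) by auto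
  have var_nonneg: "0 \<le> var S k f" for k
  proof -
    have "cmod (f s - f s) \<le> var S k f" unfolding var_def by (rule cSup_upper) (use bdd s in auto)
    then show ?thesis by simp
  qed
  have "(\<lambda>k. root k (var S k f)) \<longlonglongrightarrow> 0"
  proof (rule real_tendsto_sandwich[where f="\<lambda>_. 0" and h="\<lambda>k. root k (C+1) * \<theta> (k+1)"])
    show "\<forall>\<^sub>F k in sequentially. 0 \<le> root k (var S k f)"
      using var_nonneg by (simp add: real_root_ge_zero)
    show "\<forall>\<^sub>F k in sequentially. root k (var S k f) \<le> root k (C + 1) * \<theta> (k + 1)"
    proof (rule eventually_sequentiallyI[of 1])
      fix k :: nat assume k: "1 \<le> k"
      have "var S k f \<le> C * \<theta> (k+1) ^ k" using var unfolding var_consts_def by blast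
      also have "\<dots> \<le> (C+1) * \<theta> (k+1) ^ k" by (intro mult_right_mono theta_pow_nonneg) simp
      finally have "root k (var S k f) \<le> root k ((C+1) * \<theta> (k+1) ^ k)"
        using k by (intro real_root_le_mono) auto
      also have "\<dots> = root k (C+1) * \<theta> (k+1)"
        using k theta_nonneg by (simp add: real_root_mult real_root_power_cancel)
      finally show "root k (var S k f) \<le> root k (C + 1) * \<theta> (k + 1)" .
    qed
    have "(\<lambda>k. root k (C+1) * \<theta> (k+1)) \<longlonglongrightarrow> 1 * 0"
      using assms(2) LIMSEQ_Suc[OF theta_lim] by (intro tendsto_mult LIMSEQ_root_const) auto
    then show "(\<lambda>k. root k (C+1) * \<theta> (k+1)) \<longlonglongrightarrow> 0" by simp
  qed simp
  with bdd show ?thesis unfolding Vcl_def by blast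
qed

lemma Bsp_if_osc_bound:
  assumes "S \<noteq> {}" "C \<ge> 0" "osc_bound S \<theta> C f"
  shows "f \<in> Bsp S \<theta>" "C \<in> var_consts S \<theta> f"
  using Vcl_if_osc_bound[OF assms] var_consts_if_osc_bound[OF assms]
  unfolding Bsp_iff_var_consts by blast+

end

definition weighted_transfer :: "(nat \<Rightarrow> nat) set \<Rightarrow> ((nat \<Rightarrow> nat) \<Rightarrow> complex) \<Rightarrow>
    ((nat \<Rightarrow> nat) \<Rightarrow> complex) \<Rightarrow> (nat \<Rightarrow> nat) \<Rightarrow> complex" where
  "weighted_transfer S w \<phi> = (\<lambda>\<omega>. \<Sum>\<omega>'\<in>{\<omega>'\<in>S. shift \<omega>' = \<omega>}. w \<omega>' * \<phi> \<omega>')"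

lemma ruelle_eq_weighted_transfer: "ruelle S g \<phi> = weighted_transfer S (\<lambda>\<omega>. exp (g \<omega>)) \<phi>"
  unfolding ruelle_def weighted_transfer_def ..

lemma weighted_transfer_diff:
  "(\<lambda>\<omega>. weighted_transfer S v \<phi> \<omega> - weighted_transfer S w \<phi> \<omega>) = weighted_transfer S (\<lambda>\<omega>. v \<omega> - w \<omega>) \<phi>"
  unfolding weighted_transfer_def by (simp add: sum_subtractf[symmetric] left_diff_distrib)

lemma case_nat_in_SigmaA:
  assumes "\<omega> \<in> SigmaA N A" "a < N" "A a (\<omega> 0) = 1"
  shows "case_nat a \<omega> \<in> SigmaA N A"
  using assms unfolding SigmaA_def by (auto split: nat.split)

lemma shift_preimage_SigmaA:
  assumes "\<omega> \<in> SigmaA N A"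
  shows "{\<omega>'\<in>SigmaA N A. shift \<omega>' = \<omega>} = (\<lambda>a. case_nat a \<omega>) ` {a. a < N \<and> A a (\<omega> 0) = 1}"
proof (intro set_eqI iffI)
  fix x assume x: "x \<in> {\<omega>'\<in>SigmaA N A. shift \<omega>' = \<omega>}"
  then have "x = case_nat (x 0) \<omega>" by (auto simp: shift_def fun_eq_iff split: nat.split)
  moreover have "x 0 < N" "A (x 0) (x 1) = 1" "x 1 = \<omega> 0"
    using x unfolding SigmaA_def by (auto simp: shift_def)
  ultimately show "x \<in> (\<lambda>a. case_nat a \<omega>) ` {a. a < N \<and> A a (\<omega> 0) = 1}" by force
next
  fix x assume "x \<in> (\<lambda>a. case_nat a \<omega>) ` {a. a < N \<and> A a (\<omega> 0) = 1}"
  then show "x \<in> {\<omega>'\<in>SigmaA N A. shift \<omega>' = \<omega>}"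
    using case_nat_in_SigmaA[OF assms] by (auto simp: shift_def)
qed

lemma weighted_transfer_SigmaA:
  assumes "\<omega> \<in> SigmaA N A"
  shows "weighted_transfer (SigmaA N A) w \<phi> \<omega> =
    (\<Sum>a\<in>{a. a < N \<and> A a (\<omega> 0) = 1}. w (case_nat a \<omega>) * \<phi> (case_nat a \<omega>))"
proof -
  have "inj_on (\<lambda>a. case_nat a \<omega>) {a. a < N \<and> A a (\<omega> 0) = 1}"
    by (rule inj_onI) (metis old.nat.simps(4))
  then show ?thesis unfolding weighted_transfer_def shift_preimage_SigmaA[OF assms]
    by (simp add: sum.reindex)
qed

lemma card_admissible_symbols: "card {a. a < N \<and> A a c = 1} \<le> N"
  using card_mono[of "{..<N}" "{a. a < N \<and> A a c = 1}"] by auto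

lemma norm_weighted_transfer_le:
  assumes "\<forall>x\<in>SigmaA N A. cmod (w x) \<le> W" "\<forall>x\<in>SigmaA N A. cmod (\<phi> x) \<le> P"
    and "W \<ge> 0" "P \<ge> 0" "\<omega> \<in> SigmaA N A"
  shows "cmod (weighted_transfer (SigmaA N A) w \<phi> \<omega>) \<le> N * W * P"
proof -
  let ?I = "{a. a < N \<and> A a (\<omega> 0) = 1}"
  have "cmod (weighted_transfer (SigmaA N A) w \<phi> \<omega>) \<le>
      (\<Sum>a\<in>?I. cmod (w (case_nat a \<omega>) * \<phi> (case_nat a \<omega>)))"
    unfolding weighted_transfer_SigmaA[OF assms(5)] by (rule norm_sum)
  also have "\<dots> \<le> card ?I * (W * P)"
  proof (rule sum_bounded_above)
    fix a assume "a \<in> ?I"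
    then have "case_nat a \<omega> \<in> SigmaA N A" using case_nat_in_SigmaA[OF assms(5)] by auto
    then show "cmod (w (case_nat a \<omega>) * \<phi> (case_nat a \<omega>)) \<le> W * P"
      unfolding norm_mult using assms by (intro mult_mono) auto
  qed
  also have "\<dots> \<le> N * (W * P)"
    using card_admissible_symbols assms(3,4) by (intro mult_right_mono) auto
  finally show ?thesis by simp
qed

lemma norm_weighted_transfer_diff_le:
  assumes sup: "\<forall>x\<in>SigmaA N A. cmod (w x) \<le> W" "\<forall>x\<in>SigmaA N A. cmod (\<phi> x) \<le> P"
    and nonneg: "W \<ge> 0" "P \<ge> 0" "U\<^sub>w \<ge> 0" "U\<^sub>\<phi> \<ge> 0"
    and w_osc: "\<And>x y. x \<in> SigmaA N A \<Longrightarrow> y \<in> SigmaA N A \<Longrightarrow> \<forall>j<Suc k. x j = y j \<Longrightarrow>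
      cmod (w x - w y) \<le> U\<^sub>w"
    and \<phi>_osc: "\<And>x y. x \<in> SigmaA N A \<Longrightarrow> y \<in> SigmaA N A \<Longrightarrow> \<forall>j<Suc k. x j = y j \<Longrightarrow>
      cmod (\<phi> x - \<phi> y) \<le> U\<^sub>\<phi>"
    and points: "k \<ge> 1" "\<omega> \<in> SigmaA N A" "\<xi> \<in> SigmaA N A" "\<forall>j<k. \<omega> j = \<xi> j"
  shows "cmod (weighted_transfer (SigmaA N A) w \<phi> \<omega> - weighted_transfer (SigmaA N A) w \<phi> \<xi>)
    \<le> N * (W * U\<^sub>\<phi> + P * U\<^sub>w)"
proof -
  let ?I = "{a. a < N \<and> A a (\<omega> 0) = 1}"
  have first: "\<xi> 0 = \<omega> 0" using points(1,4) by auto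
  have "cmod (weighted_transfer (SigmaA N A) w \<phi> \<omega> - weighted_transfer (SigmaA N A) w \<phi> \<xi>) \<le>
    (\<Sum>a\<in>?I. cmod (w (case_nat a \<omega>) * \<phi> (case_nat a \<omega>) - w (case_nat a \<xi>) * \<phi> (case_nat a \<xi>)))"
    unfolding weighted_transfer_SigmaA[OF points(2)] weighted_transfer_SigmaA[OF points(3)] first
    by (simp add: sum_subtractf[symmetric] norm_sum)
  also have "\<dots> \<le> card ?I * (W * U\<^sub>\<phi> + P * U\<^sub>w)"
  proof (rule sum_bounded_above)
    fix a assume a: "a \<in> ?I"
    define x where "x = case_nat a \<omega>"
    define y where "y = case_nat a \<xi>"
    have x: "x \<in> SigmaA N A" using case_nat_in_SigmaA[OF points(2)] a x_def by auto
    have y: "y \<in> SigmaA N A" using case_nat_in_SigmaA[OF points(3)] a y_def first by auto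
    have xy: "\<forall>j<Suc k. x j = y j" using points(4) unfolding x_def y_def by (auto split: nat.split)
    have "w x * \<phi> x - w y * \<phi> y = w x * (\<phi> x - \<phi> y) + \<phi> y * (w x - w y)"
      by (simp add: algebra_simps)
    then have "cmod (w x * \<phi> x - w y * \<phi> y)
        \<le> cmod (w x) * cmod (\<phi> x - \<phi> y) + cmod (\<phi> y) * cmod (w x - w y)"
      by (metis norm_mult norm_triangle_ineq)
    also have "\<dots> \<le> W * U\<^sub>\<phi> + P * U\<^sub>w"
      using sup nonneg w_osc[OF x y xy] \<phi>_osc[OF x y xy] x y by (intro add_mono mult_mono) auto
    finally show "cmod (w (case_nat a \<omega>) * \<phi> (case_nat a \<omega>) - w (case_nat a \<xi>) * \<phi> (case_nat a \<xi>))
        \<le> W * U\<^sub>\<phi> + P * U\<^sub>w"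
      unfolding x_def y_def .
  qed
  also have "\<dots> \<le> N * (W * U\<^sub>\<phi> + P * U\<^sub>w)"
    using card_admissible_symbols nonneg by (intro mult_right_mono) auto
  finally show ?thesis .
qed

context theta_sequence
begin

lemma weighted_transfer_osc_bound:
  assumes w: "\<forall>x\<in>SigmaA N A. cmod (w x) \<le> W"
      "\<And>k x y. x \<in> SigmaA N A \<Longrightarrow> y \<in> SigmaA N A \<Longrightarrow> \<forall>j<Suc k. x j = y j \<Longrightarrow>
         cmod (w x - w y) \<le> U * \<theta> (k+1) ^ k"
    and \<phi>: "\<phi> \<in> Vcl (SigmaA N A)" "C \<in> var_consts (SigmaA N A) \<theta> \<phi>" "\<forall>x\<in>SigmaA N A. cmod (\<phi> x) \<le> P"
    and nonneg: "W \<ge> 0" "U \<ge> 0" "P \<ge> 0"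
  shows "osc_bound (SigmaA N A) \<theta> (N * (\<theta> 1 * W * C + P * U + 2 * W * P)) (weighted_transfer (SigmaA N A) w \<phi>)"
  unfolding osc_bound_def
proof (intro allI ballI impI)
  fix k \<omega> \<xi> assume \<omega>: "\<omega> \<in> SigmaA N A" and \<xi>: "\<xi> \<in> SigmaA N A" and agree: "\<forall>j<k. \<omega> j = \<xi> j"
  let ?L = "weighted_transfer (SigmaA N A) w \<phi>"
  have C: "C \<ge> 0" using \<phi>(2) unfolding var_consts_def by simp
  have \<theta>1: "0 \<le> \<theta> 1" using theta_nonneg by simp
  show "cmod (?L \<omega> - ?L \<xi>) \<le> N * (\<theta> 1 * W * C + P * U + 2 * W * P) * \<theta> (k+1) ^ k"
  proof (cases "k = 0")
    case True
    have "cmod (?L \<omega> - ?L \<xi>) \<le> cmod (?L \<omega>) + cmod (?L \<xi>)" by (rule norm_triangle_ineq4)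
    also have "\<dots> \<le> N * W * P + N * W * P"
      using norm_weighted_transfer_le[OF w(1) \<phi>(3) nonneg(1,3)] \<omega> \<xi> by (intro add_mono) auto
    also have "\<dots> \<le> N * (\<theta> 1 * W * C + P * U + 2 * W * P)"
      using C \<theta>1 nonneg by (simp add: algebra_simps)
    finally show ?thesis using True by simp
  next
    case False
    let ?t = "\<theta> (k+1) ^ k"
    have \<phi>_osc: "cmod (\<phi> x - \<phi> y) \<le> \<theta> 1 * C * ?t"
      if "x \<in> SigmaA N A" "y \<in> SigmaA N A" "\<forall>j<Suc k. x j = y j" for x y
    proof -
      have "cmod (\<phi> x - \<phi> y) \<le> C * \<theta> (Suc k + 1) ^ Suc k"
        using osc_bound_if_var_consts[OF \<phi>(1,2)] that by (rule osc_boundD)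
      also have "\<dots> \<le> C * \<theta> (k+1) ^ Suc k"
        using theta_antimono[of "k+1" "Suc k + 1"] theta_nonneg C
        by (intro mult_left_mono power_mono) auto
      also have "\<dots> = C * (\<theta> (k+1) * ?t)" by simp
      also have "\<dots> \<le> C * (\<theta> 1 * ?t)"
        using theta_antimono[of 1 "k+1"] theta_pow_nonneg C
        by (intro mult_left_mono mult_right_mono) auto
      finally show ?thesis by (simp add: mult_ac)
    qed
    have "cmod (?L \<omega> - ?L \<xi>) \<le> N * (W * (\<theta> 1 * C * ?t) + P * (U * ?t))"
      using \<omega> \<xi> agree False
      by (intro norm_weighted_transfer_diff_le[OF w(1) \<phi>(3) nonneg(1,3)] w(2) \<phi>_osc)
        (auto simp: C \<theta>1 nonneg theta_pow_nonneg)
    also have "\<dots> \<le> N * (\<theta> 1 * W * C + P * U + 2 * W * P) * ?t"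
      using nonneg theta_pow_nonneg[of k] by (simp add: algebra_simps)
    finally show ?thesis .
  qed
qed

end

lemma open_cylinder: "open {\<xi>::nat \<Rightarrow> nat. \<forall>j<k. \<xi> j = c j}"
proof -
  have "open ((\<lambda>\<xi>::nat \<Rightarrow> nat. \<xi> j) -` {c j})" for j
  proof -
    have "continuous_on UNIV (\<lambda>\<xi>::nat \<Rightarrow> nat. \<xi> j)" by simp
    then have "open ((\<lambda>\<xi>::nat \<Rightarrow> nat. \<xi> j) -` {c j} \<inter> UNIV)"
      using continuous_on_open_vimage[OF open_UNIV] Topological_Spaces.open_discrete by blast
    then show ?thesis by simp
  qed
  moreover have "{\<xi>::nat \<Rightarrow> nat. \<forall>j<k. \<xi> j = c j} = (\<Inter>j\<in>{..<k}. (\<lambda>\<xi>. \<xi> j) -` {c j})" by auto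
  ultimately show ?thesis by (simp add: open_INT)
qed

lemma continuous_on_if_uniform_cylinder_osc:
  fixes g :: "(nat \<Rightarrow> nat) \<Rightarrow> complex"
  assumes "\<And>e. e > 0 \<Longrightarrow> \<exists>k. \<forall>\<omega>\<in>S. \<forall>\<xi>\<in>S. (\<forall>j<k. \<omega> j = \<xi> j) \<longrightarrow> cmod (g \<omega> - g \<xi>) < e"
  shows "continuous_on S g"
  unfolding continuous_on_topological
proof (intro ballI allI impI)
  fix x B assume x: "x \<in> S" and B: "open B" "g x \<in> B"
  obtain e where e: "e > 0" "ball (g x) e \<subseteq> B" using B open_contains_ball by blast
  obtain k where k: "\<forall>\<omega>\<in>S. \<forall>\<xi>\<in>S. (\<forall>j<k. \<omega> j = \<xi> j) \<longrightarrow> cmod (g \<omega> - g \<xi>) < e"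
    using assms[OF e(1)] by blast
  have "g y \<in> B" if "y \<in> S" "\<forall>j<k. y j = x j" for y
    using k x that e(2) by (force simp: dist_norm)
  then show "\<exists>U. open U \<and> x \<in> U \<and> (\<forall>y\<in>S. y \<in> U \<longrightarrow> g y \<in> B)"
    by (intro exI[of _ "{\<xi>. \<forall>j<k. \<xi> j = x j}"]) (auto intro: open_cylinder)
qed

lemma norm_condE_diff_le:
  assumes \<mu>: "prob_space \<mu>" "sets \<mu> = sets (restrict_space borel S)"
    and cyl: "cyl S \<omega> m \<in> sets \<mu>" "measure \<mu> (cyl S \<omega> m) > 0"
    and g: "g \<in> borel_measurable \<mu>" "\<forall>x\<in>S. cmod (g x) \<le> B"
    and osc: "\<forall>\<xi>\<in>cyl S \<omega> m. cmod (g \<xi> - g \<omega>) \<le> V"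
  shows "cmod (condE \<mu> S m g \<omega> - g \<omega>) \<le> V"
proof -
  interpret prob_space \<mu> by (rule \<mu>(1))
  have space: "space \<mu> = S" using sets_eq_imp_space_eq[OF \<mu>(2)] by (simp add: space_restrict_space)
  define C where "C = cyl S \<omega> m"
  define c where "c = measure \<mu> C"
  have C: "C \<in> sets \<mu>" "emeasure \<mu> C \<noteq> \<infinity>" using cyl(1) C_def by simp_all
  have c: "c > 0" using cyl(2) C_def c_def by simp
  have integrable_const: "set_integrable \<mu> C (\<lambda>_. z)" for z :: complex
    unfolding set_integrable_def using C(1)
    by (intro integrable_const_bound[where B="cmod z"]) (auto simp: indicator_def)
  have "C \<noteq> {}" using c c_def by auto
  then obtain x where "x \<in> S" unfolding C_def cyl_def by auto
  then have B: "B \<ge> 0" using g(2) by (meson norm_ge_zero order.trans)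
  have "set_integrable \<mu> C g" unfolding set_integrable_def
  proof (rule integrable_const_bound[where B=B])
    show "AE x in \<mu>. norm (indicator C x *\<^sub>R g x) \<le> B"
      using g(2) B space by (intro AE_I2) (auto simp: indicator_def)
    show "(\<lambda>x. indicator C x *\<^sub>R g x) \<in> borel_measurable \<mu>"
      using g(1) C(1) by measurable
  qed
  then have int: "set_integrable \<mu> C (\<lambda>x. g x - g \<omega>)" using integrable_const by auto
  define I where "I = (LINT x:C|\<mu>. g x - g \<omega>)"
  have split: "(LINT x:C|\<mu>. g x) = I + c *\<^sub>R g \<omega>"
    unfolding I_def c_def
    using set_integral_diff(2)[OF \<open>set_integrable \<mu> C g\<close> integrable_const]
      set_integral_const[OF C, of "g \<omega>"]
    by simp
  have "norm I \<le> (LINT x:C|\<mu>. norm (g x - g \<omega>))"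
    unfolding I_def by (rule set_integral_norm_bound[OF int])
  also have "\<dots> \<le> (LINT x:C|\<mu>. V)"
  proof (rule set_integral_mono)
    show "set_integrable \<mu> C (\<lambda>x. norm (g x - g \<omega>))" by (rule set_integrable_norm[OF int])
    show "set_integrable \<mu> C (\<lambda>x. V)" unfolding set_integrable_def
      by (rule integrable_const_bound[where B="\<bar>V\<bar>"]) (use C(1) in \<open>auto simp: indicator_def\<close>)
    show "\<And>x. x \<in> C \<Longrightarrow> norm (g x - g \<omega>) \<le> V" using osc C_def by auto
  qed
  also have "\<dots> = c * V" unfolding c_def using set_integral_const[OF C, of V] by simp
  finally have "norm I \<le> c * V" .
  moreover have "condE \<mu> S m g \<omega> - g \<omega> = I / complex_of_real c"
    unfolding condE_def C_def[symmetric] c_def[symmetric] split using c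
    by (simp add: field_simps scaleR_conv_of_real)
  ultimately show ?thesis using c by (simp add: norm_divide divide_le_eq mult.commute)
qed

lemma norm_exp_diff_le:
  fixes a b :: complex
  assumes "cmod (exp b) \<le> B" "cmod (a - b) \<le> \<delta>" "cmod (a - b) \<le> R"
  shows "cmod (exp a - exp b) \<le> B * exp R * \<delta>"
proof -
  have B: "0 \<le> B" using assms(1) norm_ge_zero[of "exp b"] by linarith
  have "exp a - exp b = exp b * (exp (a - b) - 1)" by (simp add: algebra_simps exp_diff)
  then have "cmod (exp a - exp b) = cmod (exp b) * cmod (exp (a - b) - 1)" by (simp add: norm_mult)
  also have "\<dots> \<le> B * (exp (cmod (a - b)) * cmod (a - b))"
    using assms(1) B Taylor_exp_field[of "a - b" 0] by (intro mult_mono) auto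
  also have "\<dots> \<le> B * (exp R * \<delta>)"
    using assms(2,3) B norm_ge_zero[of "a - b"] by (intro mult_left_mono mult_mono) auto
  finally show ?thesis by (simp add: mult.assoc)
qed

locale ruelle_setting = theta_sequence +
  fixes N :: nat and A :: "nat \<Rightarrow> nat \<Rightarrow> real" and b1 b2 :: real
  assumes b1_pos: "b1 > 0" and b2_pos: "b2 > 0"
begin

text \<open>Both |g_m - g| and the oscillation of g on 1-cylinders are at most b2 max 1 \<theta>_1.\<close>
definition exp_bound :: real where
  "exp_bound = exp (b2 * max 1 (\<theta> 1))"

definition approx_const :: real where
  "approx_const = N * b1 * b2 * exp_bound * (\<theta> 1 + 4)"

lemma approx_const_nonneg: "0 \<le> approx_const"
  unfolding approx_const_def exp_bound_def using b1_pos b2_pos by simp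

context
  fixes \<mu> m g
  assumes admissible: "admissible_measure (SigmaA N A) \<mu>"
    and m_pos: "m \<ge> 1" and theta_m_le_1: "\<theta> m \<le> 1"
    and g_Vcl: "g \<in> Vcl (SigmaA N A)" and g_H: "condH (SigmaA N A) \<theta> b1 b2 g"
begin

abbreviation "\<Omega> \<equiv> SigmaA N A"
abbreviation "g\<^sub>m \<equiv> condE \<mu> \<Omega> m g"

lemma space_eq: "space \<mu> = \<Omega>"
  using admissible unfolding admissible_measure_def
  by (metis sets_eq_imp_space_eq space_restrict_space space_borel inf_top.right_neutral)

lemma SigmaA_nonempty: "\<Omega> \<noteq> {}"
  using admissible prob_space.not_empty space_eq unfolding admissible_measure_def by metis

lemma g_osc: "1 \<le> k \<Longrightarrow> x \<in> \<Omega> \<Longrightarrow> y \<in> \<Omega> \<Longrightarrow> \<forall>j<k. x j = y j \<Longrightarrow> cmod (g x - g y) \<le> b2 * \<theta> k ^ k"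
  using dist_le_var[OF g_Vcl] g_H unfolding condH_def by (meson order.trans)

lemma norm_exp_g_le: "x \<in> \<Omega> \<Longrightarrow> cmod (exp (g x)) \<le> b1"
  using g_H unfolding condH_def by simp

lemma g_measurable: "g \<in> borel_measurable \<mu>"
proof -
  have "continuous_on \<Omega> g"
  proof (rule continuous_on_if_uniform_cylinder_osc)
    fix e :: real assume "e > 0"
    then obtain k where k: "\<theta> k < min 1 (e / b2)" "k \<ge> 1"
      using order_tendstoD(2)[OF theta_lim, of "min 1 (e / b2)"] b2_pos
      by (metis eventually_sequentially le_add2 min_less_iff_conj nle_le zero_less_divide_iff zero_less_one)
    then have "b2 * \<theta> k ^ k < e"
      using power_decreasing[of 1 k "\<theta> k"] theta_nonneg b2_pos
      by (auto simp: less_divide_eq mult.commute intro: le_less_trans[OF mult_left_mono])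
    then show "\<exists>k. \<forall>\<omega>\<in>\<Omega>. \<forall>\<xi>\<in>\<Omega>. (\<forall>j<k. \<omega> j = \<xi> j) \<longrightarrow> cmod (g \<omega> - g \<xi>) < e"
      using g_osc[OF k(2)] by (meson le_less_trans)
  qed
  then show ?thesis
    using admissible borel_measurable_continuous_on_restrict unfolding admissible_measure_def
    by (metis measurable_cong_sets)
qed

lemma condE_g_close: "\<omega> \<in> \<Omega> \<Longrightarrow> cmod (g\<^sub>m \<omega> - g \<omega>) \<le> b2 * \<theta> m ^ m"
proof -
  assume \<omega>: "\<omega> \<in> \<Omega>"
  have cyl: "cyl \<Omega> \<omega> m = \<Omega> \<inter> {\<xi>. \<forall>j<m. \<xi> j = \<omega> j}" unfolding cyl_def by auto
  have sets: "sets \<mu> = sets (restrict_space borel \<Omega>)" and P: "prob_space \<mu>"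
    using admissible unfolding admissible_measure_def by auto
  show ?thesis
  proof (rule norm_condE_diff_le[OF P sets _ _ g_measurable])
    show "cyl \<Omega> \<omega> m \<in> sets \<mu>"
      unfolding sets sets_restrict_space cyl using open_cylinder borel_open by blast
    have "\<omega> \<in> \<Omega> \<inter> {\<xi>. \<forall>j<m. \<xi> j = \<omega> j}" using \<omega> by simp
    then show "measure \<mu> (cyl \<Omega> \<omega> m) > 0"
      using admissible openin_open_Int[OF open_cylinder] unfolding admissible_measure_def cyl by blast
    show "\<forall>x\<in>\<Omega>. cmod (g x) \<le> supnorm \<Omega> g" using norm_le_supnorm[OF g_Vcl] by blast
    show "\<forall>\<xi>\<in>cyl \<Omega> \<omega> m. cmod (g \<xi> - g \<omega>) \<le> b2 * \<theta> m ^ m"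
      using g_osc[OF m_pos] \<omega> unfolding cyl_def by auto
  qed
qed

lemma theta_m_pow_le: "\<theta> m ^ m \<le> \<theta> m"
  using power_decreasing[of 1 m "\<theta> m"] m_pos theta_m_le_1 theta_nonneg by simp

lemma theta_m_pow_le_shifted: "Suc k < m \<Longrightarrow> \<theta> m ^ m \<le> \<theta> m * \<theta> (k+1) ^ k"
proof -
  assume k: "Suc k < m"
  have "\<theta> m ^ m = \<theta> m * \<theta> m ^ (m - 1)" using m_pos by (simp add: power_eq_if)
  also have "\<dots> \<le> \<theta> m * \<theta> m ^ k"
    using k theta_m_le_1 theta_nonneg m_pos by (intro mult_left_mono power_decreasing) auto
  also have "\<dots> \<le> \<theta> m * \<theta> (k+1) ^ k"
    using k theta_antimono[of "k+1" m] theta_nonneg m_pos by (intro mult_left_mono power_mono) auto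
  finally show ?thesis .
qed

lemma g_diff_le:
  assumes "1 \<le> j" "x \<in> \<Omega>" "y \<in> \<Omega>" "\<forall>i<j. x i = y i"
  shows "cmod (g x - g y) \<le> b2 * max 1 (\<theta> 1)"
proof -
  have "cmod (g x - g y) \<le> b2 * \<theta> 1 ^ 1" using assms by (intro g_osc) auto
  also have "\<dots> \<le> b2 * max 1 (\<theta> 1)" using b2_pos by (intro mult_left_mono) auto
  finally show ?thesis .
qed

lemma exp_g_diff_le:
  assumes "1 \<le> j" "x \<in> \<Omega>" "y \<in> \<Omega>" "\<forall>i<j. x i = y i"
  shows "cmod (exp (g x) - exp (g y)) \<le> b1 * exp_bound * (b2 * \<theta> j ^ j)"
  unfolding exp_bound_def by (rule norm_exp_diff_le[OF norm_exp_g_le g_osc g_diff_le]) (use assms in auto)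

lemma exp_g_osc:
  assumes "x \<in> \<Omega>" "y \<in> \<Omega>" "\<forall>i<Suc k. x i = y i"
  shows "cmod (exp (g x) - exp (g y)) \<le> (b1 * exp_bound * b2 * \<theta> 1) * \<theta> (k+1) ^ k"
proof -
  have "cmod (exp (g x) - exp (g y)) \<le> b1 * exp_bound * (b2 * (\<theta> (k+1) * \<theta> (k+1) ^ k))"
    using exp_g_diff_le[of "Suc k"] assms by simp
  also have "\<dots> \<le> b1 * exp_bound * (b2 * (\<theta> 1 * \<theta> (k+1) ^ k))"
    using theta_antimono[of 1 "k+1"] b1_pos b2_pos unfolding exp_bound_def
    by (intro mult_left_mono mult_right_mono) auto
  finally show ?thesis by (simp add: mult_ac)
qed

lemma weight_norm_le: "x \<in> \<Omega> \<Longrightarrow> cmod (exp (g x) - exp (g\<^sub>m x)) \<le> b1 * exp_bound * (b2 * \<theta> m ^ m)"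
proof -
  assume x: "x \<in> \<Omega>"
  have "b2 * \<theta> m ^ m \<le> b2 * max 1 (\<theta> 1)"
    using theta_m_pow_le theta_m_le_1 b2_pos by (intro mult_left_mono) auto
  then have "cmod (exp (g\<^sub>m x) - exp (g x)) \<le> b1 * exp_bound * (b2 * \<theta> m ^ m)"
    unfolding exp_bound_def using condE_g_close[OF x]
    by (intro norm_exp_diff_le[OF norm_exp_g_le[OF x]]) auto
  then show ?thesis by (simp add: norm_minus_commute)
qed

lemma weight_osc:
  assumes x: "x \<in> \<Omega>" and y: "y \<in> \<Omega>" and xy: "\<forall>i<Suc k. x i = y i"
  shows "cmod ((exp (g x) - exp (g\<^sub>m x)) - (exp (g y) - exp (g\<^sub>m y)))
    \<le> 2 * (b1 * exp_bound * b2 * \<theta> m) * \<theta> (k+1) ^ k"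
proof (cases "m \<le> Suc k")
  case True
  then have "cyl \<Omega> x m = cyl \<Omega> y m" using xy unfolding cyl_def by auto
  then have "g\<^sub>m x = g\<^sub>m y" unfolding condE_def by simp
  then have "cmod ((exp (g x) - exp (g\<^sub>m x)) - (exp (g y) - exp (g\<^sub>m y))) = cmod (exp (g x) - exp (g y))"
    by simp
  also have "\<dots> \<le> b1 * exp_bound * (b2 * (\<theta> (k+1) * \<theta> (k+1) ^ k))"
    using exp_g_diff_le[of "Suc k"] assms by simp
  also have "\<dots> \<le> b1 * exp_bound * (b2 * (2 * \<theta> m * \<theta> (k+1) ^ k))"
    using True theta_antimono[of m "k+1"] theta_nonneg m_pos b1_pos b2_pos unfolding exp_bound_def
    by (intro mult_left_mono mult_right_mono) auto
  finally show ?thesis by (simp add: mult_ac)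
next
  case False
  have "cmod ((exp (g x) - exp (g\<^sub>m x)) - (exp (g y) - exp (g\<^sub>m y)))
      \<le> cmod (exp (g x) - exp (g\<^sub>m x)) + cmod (exp (g y) - exp (g\<^sub>m y))"
    by (rule norm_triangle_ineq4)
  also have "\<dots> \<le> 2 * (b1 * exp_bound * (b2 * \<theta> m ^ m))"
    using weight_norm_le[OF x] weight_norm_le[OF y] by simp
  also have "\<dots> \<le> 2 * (b1 * exp_bound * (b2 * (\<theta> m * \<theta> (k+1) ^ k)))"
    using theta_m_pow_le_shifted False b1_pos b2_pos unfolding exp_bound_def
    by (intro mult_left_mono) auto
  finally show ?thesis by (simp add: mult_ac)
qed

lemma weight_sup_le: "\<forall>x\<in>\<Omega>. cmod (exp (g x) - exp (g\<^sub>m x)) \<le> b1 * exp_bound * b2 * \<theta> m"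
proof
  fix x assume "x \<in> \<Omega>"
  have "b1 * exp_bound * (b2 * \<theta> m ^ m) \<le> b1 * exp_bound * (b2 * \<theta> m)"
    using theta_m_pow_le b1_pos b2_pos unfolding exp_bound_def by (intro mult_left_mono) auto
  then show "cmod (exp (g x) - exp (g\<^sub>m x)) \<le> b1 * exp_bound * b2 * \<theta> m"
    using weight_norm_le[OF \<open>x \<in> \<Omega>\<close>] by (simp add: mult_ac)
qed

lemma ruelle_diff_eq:
  "(\<lambda>\<omega>. ruelle \<Omega> g \<phi> \<omega> - ruelle \<Omega> g\<^sub>m \<phi> \<omega>) = weighted_transfer \<Omega> (\<lambda>x. exp (g x) - exp (g\<^sub>m x)) \<phi>"
  unfolding ruelle_eq_weighted_transfer weighted_transfer_diff ..

lemma ruelle_diff_supnorm_le: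
  assumes "\<phi> \<in> Vcl \<Omega>"
  shows "supnorm \<Omega> (\<lambda>\<omega>. ruelle \<Omega> g \<phi> \<omega> - ruelle \<Omega> g\<^sub>m \<phi> \<omega>) \<le> approx_const * \<theta> m * supnorm \<Omega> \<phi>"
proof (rule supnorm_le[OF SigmaA_nonempty], intro ballI)
  fix \<omega> assume \<omega>: "\<omega> \<in> \<Omega>"
  let ?W = "b1 * exp_bound * b2 * \<theta> m" and ?P = "supnorm \<Omega> \<phi>"
  have P: "0 \<le> ?P" by (rule supnorm_nonneg[OF assms SigmaA_nonempty])
  have W: "0 \<le> ?W" using b1_pos b2_pos theta_nonneg m_pos unfolding exp_bound_def by simp
  have "ruelle \<Omega> g \<phi> \<omega> - ruelle \<Omega> g\<^sub>m \<phi> \<omega> = weighted_transfer \<Omega> (\<lambda>x. exp (g x) - exp (g\<^sub>m x)) \<phi> \<omega>"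
    using fun_cong[OF ruelle_diff_eq, of \<phi> \<omega>] by simp
  also have "cmod \<dots> \<le> N * ?W * ?P"
    using norm_le_supnorm[OF assms]
    by (intro norm_weighted_transfer_le[OF weight_sup_le _ W P \<omega>]) blast
  also have "\<dots> \<le> approx_const * \<theta> m * ?P"
  proof -
    have "N * ?W * ?P * 1 \<le> N * ?W * ?P * (\<theta> 1 + 4)"
      using W P by (intro mult_left_mono) simp_all
    then show ?thesis unfolding approx_const_def by (simp add: mult_ac)
  qed
  finally show "cmod (ruelle \<Omega> g \<phi> \<omega> - ruelle \<Omega> g\<^sub>m \<phi> \<omega>) \<le> approx_const * \<theta> m * ?P" .
qed

lemma ruelle_diff_osc_bound:
  assumes "\<phi> \<in> Vcl \<Omega>" "C \<in> var_consts \<Omega> \<theta> \<phi>"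
  shows "osc_bound \<Omega> \<theta> (approx_const * \<theta> m * (supnorm \<Omega> \<phi> + C))
    (\<lambda>\<omega>. ruelle \<Omega> g \<phi> \<omega> - ruelle \<Omega> g\<^sub>m \<phi> \<omega>)"
proof -
  let ?W = "b1 * exp_bound * b2 * \<theta> m" and ?P = "supnorm \<Omega> \<phi>"
  have P: "0 \<le> ?P" by (rule supnorm_nonneg[OF assms(1) SigmaA_nonempty])
  have W: "0 \<le> ?W" using b1_pos b2_pos theta_nonneg m_pos unfolding exp_bound_def by simp
  have C: "0 \<le> C" using assms(2) unfolding var_consts_def by simp
  have \<phi>_sup: "\<forall>x\<in>\<Omega>. cmod (\<phi> x) \<le> ?P" using norm_le_supnorm[OF assms(1)] by blast
  have "osc_bound \<Omega> \<theta> (N * (\<theta> 1 * ?W * C + ?P * (2 * ?W) + 2 * ?W * ?P))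
      (weighted_transfer \<Omega> (\<lambda>x. exp (g x) - exp (g\<^sub>m x)) \<phi>)"
    by (rule weighted_transfer_osc_bound[OF weight_sup_le weight_osc assms \<phi>_sup W _ P]) (use W in auto)
  moreover have "N * (\<theta> 1 * ?W * C + ?P * (2 * ?W) + 2 * ?W * ?P) \<le> approx_const * \<theta> m * (?P + C)"
  proof -
    have "\<theta> 1 * C + 4 * ?P \<le> (\<theta> 1 + 4) * (?P + C)"
      using P C theta_Suc_nonneg[of 0] by (simp add: algebra_simps)
    then have "N * ?W * (\<theta> 1 * C + 4 * ?P) \<le> N * ?W * ((\<theta> 1 + 4) * (?P + C))"
      using W by (intro mult_left_mono) auto
    then show ?thesis unfolding approx_const_def by (simp add: algebra_simps)
  qed
  ultimately show ?thesis unfolding ruelle_diff_eq by (rule osc_bound_mono)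
qed

lemma ruelle_osc_bound:
  assumes "\<phi> \<in> Vcl \<Omega>" "C \<in> var_consts \<Omega> \<theta> \<phi>"
  shows "\<exists>C'\<ge>0. osc_bound \<Omega> \<theta> C' (ruelle \<Omega> g \<phi>)"
proof -
  let ?U = "b1 * exp_bound * b2 * \<theta> 1" and ?P = "supnorm \<Omega> \<phi>"
  have P: "0 \<le> ?P" by (rule supnorm_nonneg[OF assms(1) SigmaA_nonempty])
  have U: "0 \<le> ?U" using b1_pos b2_pos unfolding exp_bound_def by simp
  have C: "0 \<le> C" using assms(2) unfolding var_consts_def by simp
  have \<phi>_sup: "\<forall>x\<in>\<Omega>. cmod (\<phi> x) \<le> ?P" using norm_le_supnorm[OF assms(1)] by blast
  have w_sup: "\<forall>x\<in>\<Omega>. cmod (exp (g x)) \<le> b1" using norm_exp_g_le by blast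
  have "osc_bound \<Omega> \<theta> (N * (\<theta> 1 * b1 * C + ?P * ?U + 2 * b1 * ?P)) (ruelle \<Omega> g \<phi>)"
    unfolding ruelle_eq_weighted_transfer
    by (rule weighted_transfer_osc_bound[OF w_sup exp_g_osc assms \<phi>_sup _ U P]) (use b1_pos in auto)
  moreover have "0 \<le> N * (\<theta> 1 * b1 * C + ?P * ?U + 2 * b1 * ?P)"
    using P U C b1_pos by simp
  ultimately show ?thesis by blast
qed

theorem ruelle_condE_approx:
  assumes "\<phi> \<in> Bsp \<Omega> \<theta>"
  shows "ruelle \<Omega> g\<^sub>m \<phi> \<in> Bsp \<Omega> \<theta>"
    and "(\<lambda>\<omega>. ruelle \<Omega> g \<phi> \<omega> - ruelle \<Omega> g\<^sub>m \<phi> \<omega>) \<in> Bsp \<Omega> \<theta>"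
    and "Bnorm \<Omega> \<theta> (\<lambda>\<omega>. ruelle \<Omega> g \<phi> \<omega> - ruelle \<Omega> g\<^sub>m \<phi> \<omega>)
      \<le> (2 * approx_const + 1) * \<theta> m * Bnorm \<Omega> \<theta> \<phi>"
proof -
  let ?D = "\<lambda>\<omega>. ruelle \<Omega> g \<phi> \<omega> - ruelle \<Omega> g\<^sub>m \<phi> \<omega>" and ?P = "supnorm \<Omega> \<phi>"
  let ?a = "approx_const * \<theta> m"
  obtain C where \<phi>: "\<phi> \<in> Vcl \<Omega>" and C: "C \<in> var_consts \<Omega> \<theta> \<phi>"
    using assms unfolding Bsp_iff_var_consts by blast
  have P: "0 \<le> ?P" by (rule supnorm_nonneg[OF \<phi> SigmaA_nonempty])
  have a: "0 \<le> ?a" using approx_const_nonneg theta_nonneg m_pos by simp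
  have D_const: "0 \<le> ?a * (?P + C')" if "C' \<in> var_consts \<Omega> \<theta> \<phi>" for C'
    using a P that unfolding var_consts_def by simp
  have D_osc: "osc_bound \<Omega> \<theta> (?a * (?P + C')) ?D" if "C' \<in> var_consts \<Omega> \<theta> \<phi>" for C'
    by (rule ruelle_diff_osc_bound[OF \<phi> that])
  show "?D \<in> Bsp \<Omega> \<theta>" by (rule Bsp_if_osc_bound(1)[OF SigmaA_nonempty D_const[OF C] D_osc[OF C]])
  obtain C' where C': "C' \<ge> 0" "osc_bound \<Omega> \<theta> C' (ruelle \<Omega> g \<phi>)"
    using ruelle_osc_bound[OF \<phi> C] by blast
  have "osc_bound \<Omega> \<theta> (C' + ?a * (?P + C)) (\<lambda>\<omega>. ruelle \<Omega> g \<phi> \<omega> - ?D \<omega>)"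
    by (rule osc_bound_diff[OF C'(2) D_osc[OF C]])
  then show "ruelle \<Omega> g\<^sub>m \<phi> \<in> Bsp \<Omega> \<theta>"
    using Bsp_if_osc_bound(1)[OF SigmaA_nonempty add_nonneg_nonneg[OF C'(1) D_const[OF C]]] by simp
  have "Bnorm \<Omega> \<theta> ?D \<le> 2 * ?a * Bnorm \<Omega> \<theta> \<phi>"
  proof (rule Bnorm_le_if_var_consts[OF a ruelle_diff_supnorm_le[OF \<phi>]])
    show "var_consts \<Omega> \<theta> \<phi> \<noteq> {}" using C by blast
    show "?a * (?P + C') \<in> var_consts \<Omega> \<theta> ?D" if "C' \<in> var_consts \<Omega> \<theta> \<phi>" for C'
      by (rule Bsp_if_osc_bound(2)[OF SigmaA_nonempty D_const[OF that] D_osc[OF that]])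
  qed
  also have "\<dots> \<le> (2 * approx_const + 1) * \<theta> m * Bnorm \<Omega> \<theta> \<phi>"
  proof -
    have "0 \<le> Inf (var_consts \<Omega> \<theta> \<phi>)" using Inf_var_consts_nonneg C by blast
    then have "0 \<le> \<theta> m * Bnorm \<Omega> \<theta> \<phi>"
      using P theta_nonneg m_pos unfolding Bnorm_eq by simp
    then show ?thesis by (simp add: algebra_simps)
  qed
  finally show "Bnorm \<Omega> \<theta> ?D \<le> (2 * approx_const + 1) * \<theta> m * Bnorm \<Omega> \<theta> \<phi>" .
qed

end

end

theorem lemma3p7:
  fixes N :: nat and A :: "nat \<Rightarrow> nat \<Rightarrow> real" and \<theta> :: "nat \<Rightarrow> real" and b1 b2 :: real
  assumes "zero_one_aperiodic N A"
    and "\<forall>m\<ge>1. \<theta> (Suc m) \<le> \<theta> m" and "\<forall>m\<ge>1. \<theta> m \<ge> 0" and "\<theta> \<longlonglongrightarrow> 0"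
    and "b1 > 0" and "b2 > 0"
  shows "\<exists>C3>0. \<forall>\<mu> m g. admissible_measure (SigmaA N A) \<mu> \<and> m \<ge> 1 \<and> \<theta> m \<le> 1 \<and>
           g \<in> Vcl (SigmaA N A) \<and> condH (SigmaA N A) \<theta> b1 b2 g \<longrightarrow>
           (\<forall>\<phi>\<in>Bsp (SigmaA N A) \<theta>.
              ruelle (SigmaA N A) (condE \<mu> (SigmaA N A) m g) \<phi> \<in> Bsp (SigmaA N A) \<theta> \<and>
              (\<lambda>\<omega>. ruelle (SigmaA N A) g \<phi> \<omega> - ruelle (SigmaA N A) (condE \<mu> (SigmaA N A) m g) \<phi> \<omega>)
                \<in> Bsp (SigmaA N A) \<theta> \<and>
              Bnorm (SigmaA N A) \<theta>
                (\<lambda>\<omega>. ruelle (SigmaA N A) g \<phi> \<omega> - ruelle (SigmaA N A) (condE \<mu> (SigmaA N A) m g) \<phi> \<omega>)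
                \<le> C3 * \<theta> m * Bnorm (SigmaA N A) \<theta> \<phi>)"
proof -
  interpret ruelle_setting \<theta> N A b1 b2
    using assms(2-6) by unfold_locales auto
  have "0 < 2 * approx_const + 1" using approx_const_nonneg by linarith
  moreover have "ruelle (SigmaA N A) (condE \<mu> (SigmaA N A) m g) \<phi> \<in> Bsp (SigmaA N A) \<theta> \<and>
      (\<lambda>\<omega>. ruelle (SigmaA N A) g \<phi> \<omega> - ruelle (SigmaA N A) (condE \<mu> (SigmaA N A) m g) \<phi> \<omega>)
        \<in> Bsp (SigmaA N A) \<theta> \<and>
      Bnorm (SigmaA N A) \<theta>
        (\<lambda>\<omega>. ruelle (SigmaA N A) g \<phi> \<omega> - ruelle (SigmaA N A) (condE \<mu> (SigmaA N A) m g) \<phi> \<omega>)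
        \<le> (2 * approx_const + 1) * \<theta> m * Bnorm (SigmaA N A) \<theta> \<phi>"
    if "admissible_measure (SigmaA N A) \<mu> \<and> m \<ge> 1 \<and> \<theta> m \<le> 1 \<and>
        g \<in> Vcl (SigmaA N A) \<and> condH (SigmaA N A) \<theta> b1 b2 g"
      and "\<phi> \<in> Bsp (SigmaA N A) \<theta>" for \<mu> m g \<phi>
    using ruelle_condE_approx[of \<mu> m g \<phi>] that by blast
  ultimately show ?thesis by blast
qed

end
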